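(* With the notation of the context, for every $\varepsilon>0$, $$\mathcal D:=\sum_{\substack{a\ge1\\(a,q)=1}}\frac{\mu(a)}{a^{3/2}}\sum_{\substack{m,n\ge1\\ m=na}}\frac{\tau(m)\,\tau_3(n,F_{a,\sqrt q})}{\sqrt{mn}}V\Big(\frac mq\Big)\ll_{\kappa,\varepsilon}q^{\varepsilon}$$ as $q\to\infty$ through primes.
   Context: $q$ prime, $\kappa$ fixed positive even integer, $\gamma(s,\kappa)=\pi^{-s}\Gamma\big(\frac{s+\frac{\kappa-1}2}{2}\big)\Gamma\big(\frac{s+\frac{\kappa+1}2}{2}\big)$. $G_1,G_2$ are even entire functions with $G_i(0)=1$, rapidly decaying in vertical strips. $V_i$ ($i=1,2$): $V_1(x)=\frac1{2\pi i}\int_{(1)}\frac{G_1(u)}{u}\frac{\gamma(\frac12+u,\kappa)}{\gamma(\frac12,\kappa)}x^{-u}du$, $V_2(x)=\frac1{2\pi i}\int_{(1)}\frac{G_2(u)}{u}\frac{\gamma(\frac12+u,\kappa)^2}{\gamma(\frac12,\kappa)^2}x^{-u}du$; $V(x)=\sum_{(e,q)=1}V_2(e^2x)/e$. $F_a(x_1,x_2,x_3)=\sum_{(e_1e_2e_3,q)=1}(e_1e_2e_3)^{-1}V_1(ax_1e_1e_2)V_1(ax_2e_1e_3)V_1(ax_3e_2e_3)$ and $\tau_3(n,F_{a,\sqrt q})=\sum_{n_1n_2n_3=n}F_a(n_1/\sqrt q,n_2/\sqrt q,n_3/\sqrt q)$. $\tau$ is the divisor function, $\mu$ the Möbius function.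 *)

theory Defs
  imports "HOL-Analysis.Analysis" "HOL-Computational_Algebra.Squarefree"
begin

definition moebius_mu :: "nat \<Rightarrow> real" where
  "moebius_mu n = (if n = 0 \<or> \<not> squarefree n then 0
                   else (-1) ^ card (prime_factors n))"

definition divisor_count :: "nat \<Rightarrow> real" where
  "divisor_count n = real (card {d. d dvd n \<and> d > 0})"

text \<open>(1/(2 pi i)) times the integral over the vertical line Re u = 1:
  with u = 1 + i t this is (1/(2 pi)) times the integral over t of f(1 + i t).\<close>
definition vert_int1 :: "(complex \<Rightarrow> complex) \<Rightarrow> complex" where
  "vert_int1 f = (LINT t|lborel. f (Complex 1 t)) / complex_of_real (2 * pi)"

definition gamma_fac :: "complex \<Rightarrow> nat \<Rightarrow> complex" where
  "gamma_fac s \<kappa> = complex_of_real pi powr (- s)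
      * Gamma ((s + (of_nat \<kappa> - 1) / 2) / 2)
      * Gamma ((s + (of_nat \<kappa> + 1) / 2) / 2)"

definition admissible_G :: "(complex \<Rightarrow> complex) \<Rightarrow> bool" where
  "admissible_G G \<longleftrightarrow> G holomorphic_on UNIV \<and> (\<forall>z. G (- z) = G z) \<and> G 0 = 1 \<and>
     (\<forall>a b A::real. \<exists>C. \<forall>z. a \<le> Re z \<and> Re z \<le> b \<longrightarrow>
          norm (G z) \<le> C * (1 + \<bar>Im z\<bar>) powr (- A))"

definition V1 :: "(complex \<Rightarrow> complex) \<Rightarrow> nat \<Rightarrow> real \<Rightarrow> complex" where
  "V1 G \<kappa> x = vert_int1 (\<lambda>u. G u / u * (gamma_fac (1/2 + u) \<kappa> / gamma_fac (1/2) \<kappa>)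
                                 * complex_of_real x powr (- u))"

definition V2 :: "(complex \<Rightarrow> complex) \<Rightarrow> nat \<Rightarrow> real \<Rightarrow> complex" where
  "V2 G \<kappa> x = vert_int1 (\<lambda>u. G u / u * (gamma_fac (1/2 + u) \<kappa> ^ 2 / gamma_fac (1/2) \<kappa> ^ 2)
                                 * complex_of_real x powr (- u))"

definition Vsum :: "(complex \<Rightarrow> complex) \<Rightarrow> nat \<Rightarrow> nat \<Rightarrow> real \<Rightarrow> complex" where
  "Vsum G2 \<kappa> q x = (\<Sum>\<^sub>\<infinity> e \<in> {e::nat. e \<ge> 1 \<and> coprime e q}.
                        V2 G2 \<kappa> (real e ^ 2 * x) / of_nat e)"

definition Ffun :: "(complex \<Rightarrow> complex) \<Rightarrow> nat \<Rightarrow> nat \<Rightarrow> nat \<Rightarrow> real \<Rightarrow> real \<Rightarrow> real \<Rightarrow> complex" where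
  "Ffun G1 \<kappa> q a x1 x2 x3 =
     (\<Sum>\<^sub>\<infinity> (e1, e2, e3) \<in> {(e1::nat, e2::nat, e3::nat). e1 \<ge> 1 \<and> e2 \<ge> 1 \<and> e3 \<ge> 1 \<and>
                                   coprime (e1 * e2 * e3) q}.
        V1 G1 \<kappa> (real a * x1 * real e1 * real e2) * V1 G1 \<kappa> (real a * x2 * real e1 * real e3)
        * V1 G1 \<kappa> (real a * x3 * real e2 * real e3) / of_nat (e1 * e2 * e3))"

definition tau3F :: "(complex \<Rightarrow> complex) \<Rightarrow> nat \<Rightarrow> nat \<Rightarrow> nat \<Rightarrow> nat \<Rightarrow> complex" where
  "tau3F G1 \<kappa> q a n =
     (\<Sum>(n1, n2, n3) \<in> {(n1::nat, n2::nat, n3::nat). n1 * n2 * n3 = n}.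
        Ffun G1 \<kappa> q a (real n1 / sqrt (real q)) (real n2 / sqrt (real q)) (real n3 / sqrt (real q)))"

definition Dsum :: "(complex \<Rightarrow> complex) \<Rightarrow> (complex \<Rightarrow> complex) \<Rightarrow> nat \<Rightarrow> nat \<Rightarrow> complex" where
  "Dsum G1 G2 \<kappa> q =
     (\<Sum>\<^sub>\<infinity> a \<in> {a::nat. a \<ge> 1 \<and> coprime a q}.
        complex_of_real (moebius_mu a / real a powr (3/2)) *
        (\<Sum>\<^sub>\<infinity> (m, n) \<in> {(m::nat, n::nat). m \<ge> 1 \<and> n \<ge> 1 \<and> m = n * a}.
            complex_of_real (divisor_count m) * tau3F G1 \<kappa> q a n
            / complex_of_real (sqrt (real m * real n))
            * Vsum G2 \<kappa> q (real m / real q)))"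

end

theory Submission
  imports Defs "HOL-Complex_Analysis.Complex_Analysis" "HOL-Probability.Sinc_Integral"
begin

text \<open>Shifting the line of integration in the Mellin integrals defining \<open>V\<^sub>1\<close> and \<open>V\<^sub>2\<close> from
  \<open>Re u = 1\<close> to \<open>Re u = \<delta>\<close> (the Gamma factors are bounded in vertical strips and \<open>G\<close> decays
  rapidly) gives \<open>V\<^sub>i(x) \<ll> x\<^sup>-\<^sup>\<delta>\<close> for every \<open>0 < \<delta> \<le> 1\<close>. Inserting this bound, every sum in \<open>\<D>\<close>
  converges absolutely and is dominated by a product of convergent Dirichlet series: the sums over
  \<open>e\<close> and \<open>e\<^sub>1, e\<^sub>2, e\<^sub>3\<close> by \<open>\<zeta>(1 + 2\<delta>)\<close>, the sum over \<open>n\<close> by \<open>\<Sum> \<tau>(n) \<tau>\<^sub>3(n) n\<^sup>-\<^sup>1\<^sup>-\<^sup>2\<^sup>\<delta> \<le> (\<Sum> \<tau>(n) n\<^sup>-\<^sup>1\<^sup>-\<^sup>2\<^sup>\<delta>)\<^sup>3\<close>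
  (as \<open>\<tau>\<close> is submultiplicative), and the sum over \<open>a\<close> by \<open>\<Sum> \<tau>(a) a\<^sup>-\<^sup>3\<^sup>/\<^sup>2\<close>. The only loss
  in \<open>q\<close> comes from the arguments \<open>n\<^sub>i/\<surd>q\<close> of \<open>F\<^sub>a\<close> (a factor \<open>q\<^sup>3\<^sup>\<delta>\<^sup>/\<^sup>2\<close>) and \<open>m/q\<close> of \<open>V\<close>
  (a factor \<open>q\<^sup>\<delta>\<close>), so \<open>\<D> \<ll> q\<^sup>5\<^sup>\<delta>\<^sup>/\<^sup>2\<close>; take \<open>\<delta> = 2\<epsilon>/5\<close>.\<close>

section \<open>Bounds for the Gamma factor\<close>

lemma norm_Gamma_le_Gamma_Re:
  fixes z :: complex
  assumes "Re z > 0"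
  shows "norm (Gamma z) \<le> Gamma (Re z)"
proof -
  have int_z: "((\<lambda>t. of_real t powr (z - 1) / of_real (exp t)) has_integral Gamma z) {0..}"
    using Gamma_integral_complex assms by blast
  have int_Re: "((\<lambda>t. t powr (Re z - 1) / exp t) has_integral Gamma (Re z)) {0..}"
    using Gamma_integral_real assms by blast
  have "norm (integral {0..} (\<lambda>t. of_real t powr (z - 1) / of_real (exp t)))
      \<le> integral {0..} (\<lambda>t. t powr (Re z - 1) / exp t)"
    using int_z int_Re
    by (intro integral_norm_bound_integral) (auto simp: norm_divide norm_powr_real_powr)
  with int_z int_Re show ?thesis
    by (simp add: integral_unique)
qed

lemma Gamma_bounded_on_strip:
  assumes "a > 0"
  shows "\<exists>M. \<forall>z::complex. a \<le> Re z \<and> Re z \<le> b \<longrightarrow> norm (Gamma z) \<le> M"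
proof -
  have "continuous_on {a..b} (Gamma :: real \<Rightarrow> real)"
    using assms by (intro continuous_on_Gamma) (auto elim!: nonpos_Ints_cases)
  then have "compact (Gamma ` {a..b} :: real set)"
    by (intro compact_continuous_image) auto
  then obtain M where M: "\<And>x. x \<in> {a..b} \<Longrightarrow> norm (Gamma x :: real) \<le> M"
    by (meson bounded_iff compact_imp_bounded imageI)
  have "norm (Gamma z) \<le> M" if "a \<le> Re z" "Re z \<le> b" for z :: complex
    using norm_Gamma_le_Gamma_Re[of z] M[of "Re z"] that assms by auto
  then show ?thesis by blast
qed

lemma gamma_fac_bounded_on_strip:
  assumes "a > 1/2"
  shows "\<exists>M. \<forall>s. a \<le> Re s \<and> Re s \<le> b \<longrightarrow> norm (gamma_fac s \<kappa>) \<le> M"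
proof -
  obtain M where M: "\<And>z. (a - 1/2) / 2 \<le> Re z \<and> Re z \<le> (b + \<kappa> + 1) / 2 \<Longrightarrow> norm (Gamma z) \<le> M"
    using Gamma_bounded_on_strip[of "(a - 1/2) / 2" "(b + \<kappa> + 1) / 2"] assms by auto
  have "norm (gamma_fac s \<kappa>) \<le> M * M" if s: "a \<le> Re s" "Re s \<le> b" for s
  proof -
    have "norm (complex_of_real pi powr (- s)) = pi powr (- Re s)"
      by (simp add: norm_powr_real_powr)
    also have "\<dots> \<le> pi powr 0"
      using s assms pi_gt3 by (intro powr_mono) auto
    finally have pi_le: "norm (complex_of_real pi powr (- s)) \<le> 1" by simp
    have Gamma1: "norm (Gamma ((s + (of_nat \<kappa> - 1) / 2) / 2)) \<le> M"
      and Gamma2: "norm (Gamma ((s + (of_nat \<kappa> + 1) / 2) / 2)) \<le> M"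
      using s assms by (intro M; simp add: field_simps)+
    have "norm (gamma_fac s \<kappa>) \<le> 1 * M * M"
      unfolding gamma_fac_def norm_mult
      by (intro mult_mono pi_le Gamma1 Gamma2) (use Gamma1 in \<open>auto intro: order.trans[OF norm_ge_zero]\<close>)
    then show ?thesis by simp
  qed
  then show ?thesis by blast
qed

section \<open>Shifting the line of integration\<close>

lemma tendsto_integral_symmetric_interval:
  fixes f :: "real \<Rightarrow> complex"
  assumes f: "integrable lborel f"
  shows "((\<lambda>T. integral {-T..T} f) \<longlongrightarrow> (LINT t|lborel. f t)) at_top"
proof -
  have "((\<lambda>T. LINT t|lborel. indicator {-T..T} t *\<^sub>R f t) \<longlongrightarrow> (LINT t|lborel. f t)) at_top"
  proof (rule integral_dominated_convergence_at_top[where w = "\<lambda>t. norm (f t)"])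
    show "AE t in lborel. ((\<lambda>T. indicator {-T..T} t *\<^sub>R f t) \<longlongrightarrow> f t) at_top"
    proof (rule AE_I2, rule tendsto_eventually)
      show "\<forall>\<^sub>F T in at_top. indicator {-T..T} t *\<^sub>R f t = f t" for t
        using eventually_ge_at_top[of "\<bar>t\<bar>"] by eventually_elim (auto simp: indicator_def)
    qed
  qed (use f in \<open>auto simp: indicator_def\<close>)
  moreover have "(LINT t|lborel. indicator {-T..T} t *\<^sub>R f t) = integral {-T..T} f" for T
  proof -
    have "set_integrable lborel {-T..T} f"
      unfolding set_integrable_def by (rule integrable_mult_indicator) (use f in auto)
    from set_borel_integral_eq_integral(2)[OF this] show ?thesis
      by (simp add: set_lebesgue_integral_def)
  qed
  ultimately show ?thesis by simp
qed

lemma has_integral_vertical_segment: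
  assumes "\<And>t. t \<in> {-T..T} \<Longrightarrow> (\<Psi> has_field_derivative \<phi> (Complex \<sigma> t)) (at (Complex \<sigma> t))"
    and "T \<ge> 0"
  shows "((\<lambda>t. \<phi> (Complex \<sigma> t) * \<i>) has_integral \<Psi> (Complex \<sigma> T) - \<Psi> (Complex \<sigma> (-T))) {-T..T}"
proof (rule fundamental_theorem_of_calculus)
  fix t assume t: "t \<in> {-T..T}"
  have "((\<lambda>t. Complex \<sigma> t) has_vector_derivative \<i>) (at t)"
    unfolding Complex_eq by (auto intro!: derivative_eq_intros)
  from field_vector_diff_chain_at[OF this assms(1)[OF t]]
  show "((\<lambda>t. \<Psi> (Complex \<sigma> t)) has_vector_derivative \<phi> (Complex \<sigma> t) * \<i>) (at t within {-T..T})"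
    by (simp add: o_def mult.commute has_vector_derivative_at_within)
qed (use assms(2) in simp)

lemma has_integral_horizontal_segment:
  assumes "\<And>s. s \<in> {a..b} \<Longrightarrow> (\<Psi> has_field_derivative \<phi> (Complex s T)) (at (Complex s T))"
    and "a \<le> b"
  shows "((\<lambda>s. \<phi> (Complex s T)) has_integral \<Psi> (Complex b T) - \<Psi> (Complex a T)) {a..b}"
proof (rule fundamental_theorem_of_calculus)
  fix s assume s: "s \<in> {a..b}"
  have "((\<lambda>s. Complex s T) has_vector_derivative 1) (at s)"
    unfolding Complex_eq by (auto intro!: derivative_eq_intros)
  from field_vector_diff_chain_at[OF this assms(1)[OF s]]
  show "((\<lambda>s. \<Psi> (Complex s T)) has_vector_derivative \<phi> (Complex s T)) (at s within {a..b})"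
    by (simp add: o_def has_vector_derivative_at_within)
qed (use assms(2) in simp)

definition decays_in_strips :: "(complex \<Rightarrow> complex) \<Rightarrow> bool" where
  "decays_in_strips h \<longleftrightarrow> (\<forall>a b. a > 0 \<longrightarrow>
     (\<exists>C. \<forall>z. a \<le> Re z \<and> Re z \<le> b \<longrightarrow> norm (h z) \<le> C * inverse (1 + (Im z)^2)))"

lemma integrable_vertical_line:
  fixes \<phi> :: "complex \<Rightarrow> complex"
  assumes hol: "\<phi> holomorphic_on {z. Re z > 0}"
    and decay: "decays_in_strips \<phi>"
    and "\<sigma> > 0"
  shows "integrable lborel (\<lambda>t. \<phi> (Complex \<sigma> t))"
proof -
  obtain C where C: "\<And>z. \<sigma> \<le> Re z \<and> Re z \<le> \<sigma> \<Longrightarrow> norm (\<phi> z) \<le> C * inverse (1 + (Im z)^2)"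
    using decay \<open>\<sigma> > 0\<close> unfolding decays_in_strips_def by blast
  have "continuous_on UNIV (\<lambda>t. \<phi> (Complex \<sigma> t))"
    by (rule continuous_on_compose2[OF holomorphic_on_imp_continuous_on[OF hol]])
       (use \<open>\<sigma> > 0\<close> in \<open>auto simp: Complex_eq intro!: continuous_intros\<close>)
  then have "(\<lambda>t. \<phi> (Complex \<sigma> t)) \<in> borel_measurable lborel"
    by (simp add: borel_measurable_continuous_onI)
  moreover have "integrable lborel (\<lambda>t. C * inverse (1 + t^2))"
    using integrable_inverse_1_plus_square by (simp add: set_integrable_def)
  moreover have "AE t in lborel. norm (\<phi> (Complex \<sigma> t)) \<le> norm (C * inverse (1 + t^2))"
    using C[of "Complex \<sigma> _"] by (auto intro: order.trans[OF _ abs_ge_self])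
  ultimately show ?thesis
    using Bochner_Integration.integrable_bound by blast
qed

lemma tendsto_integral_horizontal_segment:
  assumes decay: "decays_in_strips \<phi>" and "0 < a" "a \<le> b"
    and integrable: "\<And>T. (\<lambda>s. \<phi> (Complex s T)) integrable_on {a..b}"
  shows "((\<lambda>T. integral {a..b} (\<lambda>s. \<phi> (Complex s T))) \<longlongrightarrow> 0) at_top"
    and "((\<lambda>T. integral {a..b} (\<lambda>s. \<phi> (Complex s (-T)))) \<longlongrightarrow> 0) at_top"
proof -
  obtain C where C: "\<And>z. a \<le> Re z \<and> Re z \<le> b \<Longrightarrow> norm (\<phi> z) \<le> C * inverse (1 + (Im z)^2)"
    using decay \<open>0 < a\<close> unfolding decays_in_strips_def by blast
  have bound: "norm (integral {a..b} (\<lambda>s. \<phi> (Complex s T))) \<le> (b - a) * (C * inverse (1 + T^2))" for T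
  proof -
    have "norm (integral {a..b} (\<lambda>s. \<phi> (Complex s T))) \<le> integral {a..b} (\<lambda>s. C * inverse (1 + T^2))"
      using integrable C[of "Complex _ T"] by (intro integral_norm_bound_integral) auto
    then show ?thesis using \<open>a \<le> b\<close> by (simp add: mult_ac)
  qed
  have bound_lim: "((\<lambda>T. (b - a) * (C * inverse (1 + T^2))) \<longlongrightarrow> 0) at_top"
    by real_asymp
  show "((\<lambda>T. integral {a..b} (\<lambda>s. \<phi> (Complex s T))) \<longlongrightarrow> 0) at_top"
    by (rule Lim_null_comparison[OF always_eventually, rotated, OF bound_lim]) (use bound in blast)
  show "((\<lambda>T. integral {a..b} (\<lambda>s. \<phi> (Complex s (-T)))) \<longlongrightarrow> 0) at_top"
    by (rule Lim_null_comparison[OF always_eventually, rotated, OF bound_lim]) (use bound[of "-_"] in simp)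
qed

lemma vertical_line_integral_shift:
  fixes \<phi> :: "complex \<Rightarrow> complex"
  assumes hol: "\<phi> holomorphic_on {z. Re z > 0}"
    and decay: "decays_in_strips \<phi>"
    and \<delta>: "0 < \<delta>" "\<delta> \<le> 1"
  shows "(LINT t|lborel. \<phi> (Complex 1 t)) = (LINT t|lborel. \<phi> (Complex \<delta> t))"
proof -
  have "open {z. Re z > 0}" "convex {z. Re z > 0}"
    by (simp_all add: open_halfspace_Re_gt convex_halfspace_Re_gt)
  then obtain \<Psi> where \<Psi>: "\<And>z. Re z > 0 \<Longrightarrow> (\<Psi> has_field_derivative \<phi> z) (at z)"
    using holomorphic_convex_primitive'[OF _ _ hol] at_within_open by (metis mem_Collect_eq)
  define I where "I \<sigma> T = integral {-T..T} (\<lambda>t. \<phi> (Complex \<sigma> t))" for \<sigma> T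
  define H where "H T = integral {\<delta>..1} (\<lambda>s. \<phi> (Complex s T))" for T
  have vertical: "I \<sigma> T * \<i> = \<Psi> (Complex \<sigma> T) - \<Psi> (Complex \<sigma> (-T))" if "\<sigma> > 0" "T \<ge> 0" for \<sigma> T
    using integral_unique[OF has_integral_vertical_segment[of T \<Psi> \<phi> \<sigma>]] that \<Psi>
    unfolding I_def by (simp add: integral_mult_left)
  have horizontal: "((\<lambda>s. \<phi> (Complex s T)) has_integral \<Psi> (Complex 1 T) - \<Psi> (Complex \<delta> T)) {\<delta>..1}" for T
    using \<delta> by (intro has_integral_horizontal_segment \<Psi>) auto
  \<comment> \<open>Cauchy's theorem for the rectangle with vertices \<open>\<delta> \<plusminus> iT\<close>, \<open>1 \<plusminus> iT\<close>\<close>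
  have rectangle: "\<i> * (I 1 T - I \<delta> T) = H T - H (-T)" if "T \<ge> 0" for T
    using vertical[of 1 T] vertical[of \<delta> T] horizontal[of T] horizontal[of "-T"] \<delta> that
    unfolding H_def by (simp add: integral_unique algebra_simps)
  have "(\<lambda>s. \<phi> (Complex s T)) integrable_on {\<delta>..1}" for T
    using horizontal[of T] by (rule has_integral_integrable)
  from tendsto_integral_horizontal_segment[OF decay \<delta> this]
  have "((\<lambda>T. H T - H (-T)) \<longlongrightarrow> 0) at_top"
    unfolding H_def using tendsto_diff by fastforce
  then have "((\<lambda>T. \<i> * (I 1 T - I \<delta> T)) \<longlongrightarrow> 0) at_top"
    by (rule Lim_transform_eventually)
       (use eventually_ge_at_top[of 0] in \<open>rule eventually_mono, metis rectangle\<close>)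
  moreover have "((\<lambda>T. \<i> * (I 1 T - I \<delta> T)) \<longlongrightarrow>
      \<i> * ((LINT t|lborel. \<phi> (Complex 1 t)) - (LINT t|lborel. \<phi> (Complex \<delta> t)))) at_top"
    unfolding I_def using \<delta>
    by (intro tendsto_intros tendsto_integral_symmetric_interval integrable_vertical_line[OF hol decay]) auto
  ultimately have "\<i> * ((LINT t|lborel. \<phi> (Complex 1 t)) - (LINT t|lborel. \<phi> (Complex \<delta> t))) = 0"
    using tendsto_unique[OF trivial_limit_at_top_linorder] by blast
  then show ?thesis by simp
qed

lemma decays_in_strips_mult_powr:
  assumes decay: "decays_in_strips h" and "x > 0"
  shows "decays_in_strips (\<lambda>z. h z * complex_of_real x powr (- z))"
  unfolding decays_in_strips_def
proof (intro allI impI)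
  fix a b :: real assume "a > 0"
  obtain C where C: "\<And>z. a \<le> Re z \<and> Re z \<le> b \<Longrightarrow> norm (h z) \<le> C * inverse (1 + (Im z)^2)"
    using decay \<open>a > 0\<close> unfolding decays_in_strips_def by blast
  have "norm (h z * complex_of_real x powr (- z))
          \<le> (C * (x powr (- a) + x powr (- b))) * inverse (1 + (Im z)^2)"
    if z: "a \<le> Re z" "Re z \<le> b" for z
  proof -
    have "x powr (- Re z) \<le> x powr (- a) + x powr (- b)"
    proof (cases "x \<ge> 1")
      case True
      then have "x powr (- Re z) \<le> x powr (- a)" using z by (intro powr_mono) auto
      then show ?thesis by (simp add: add_increasing2)
    next
      case False
      then have "x powr (- Re z) \<le> x powr (- b)" using z \<open>x > 0\<close> by (intro powr_mono') auto
      then show ?thesis by (simp add: add_increasing)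
    qed
    moreover have "0 \<le> C * inverse (1 + (Im z)^2)"
      using C z by (meson norm_ge_zero order.trans)
    ultimately have "norm (h z) * x powr (- Re z) \<le> (C * inverse (1 + (Im z)^2)) * (x powr (- a) + x powr (- b))"
      using C z by (intro mult_mono) auto
    then show ?thesis
      using \<open>x > 0\<close> by (simp add: norm_mult norm_powr_real_powr mult_ac)
  qed
  then show "\<exists>C. \<forall>z. a \<le> Re z \<and> Re z \<le> b \<longrightarrow>
      norm (h z * complex_of_real x powr (- z)) \<le> C * inverse (1 + (Im z)^2)"
    by blast
qed

lemma norm_vert_int1_powr_le:
  fixes h :: "complex \<Rightarrow> complex"
  assumes hol: "h holomorphic_on {z. Re z > 0}"
    and decay: "decays_in_strips h"
    and \<delta>: "0 < \<delta>" "\<delta> \<le> 1"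
  shows "\<exists>K\<ge>0. \<forall>x>0. norm (vert_int1 (\<lambda>u. h u * complex_of_real x powr (- u))) \<le> K * x powr (- \<delta>)"
proof (intro exI conjI allI impI)
  let ?K = "(LINT t|lborel. norm (h (Complex \<delta> t))) / (2 * pi)"
  show "?K \<ge> 0" by (intro divide_nonneg_pos integral_nonneg) auto
  fix x :: real assume "x > 0"
  let ?\<phi> = "\<lambda>u. h u * complex_of_real x powr (- u)"
  have "(LINT t|lborel. ?\<phi> (Complex 1 t)) = (LINT t|lborel. ?\<phi> (Complex \<delta> t))"
    using \<open>x > 0\<close> \<delta>
    by (intro vertical_line_integral_shift holomorphic_intros hol decays_in_strips_mult_powr[OF decay])
  then have "norm (vert_int1 ?\<phi>) = norm (LINT t|lborel. ?\<phi> (Complex \<delta> t)) / (2 * pi)"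
    by (simp add: vert_int1_def norm_divide)
  also have "\<dots> \<le> (LINT t|lborel. norm (?\<phi> (Complex \<delta> t))) / (2 * pi)"
    by (intro divide_right_mono integral_norm_bound) auto
  also have "\<dots> = ?K * x powr (- \<delta>)"
    using \<open>x > 0\<close> by (simp add: norm_mult norm_powr_real_powr)
  finally show "norm (vert_int1 ?\<phi>) \<le> ?K * x powr (- \<delta>)" .
qed

section \<open>Decay of the weights \<open>V\<^sub>1\<close> and \<open>V\<^sub>2\<close>\<close>

lemma admissible_G_strip_decay:
  assumes "admissible_G G"
  shows "\<exists>C. \<forall>z. a \<le> Re z \<and> Re z \<le> b \<longrightarrow> norm (G z) \<le> C * inverse (1 + (Im z)^2)"
proof -
  obtain C where C: "\<And>z. a \<le> Re z \<and> Re z \<le> b \<Longrightarrow> norm (G z) \<le> C * (1 + \<bar>Im z\<bar>) powr (- 2)"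
    using assms unfolding admissible_G_def by blast
  have "norm (G z) \<le> C * inverse (1 + (Im z)^2)" if z: "a \<le> Re z \<and> Re z \<le> b" for z
  proof -
    have "0 \<le> C * (1 + \<bar>Im z\<bar>) powr (- 2)"
      using C[OF z] by (meson norm_ge_zero order.trans)
    moreover have "0 < (1 + \<bar>Im z\<bar>) powr (- 2)"
      by simp
    ultimately have "C \<ge> 0"
      by (metis zero_le_mult_iff linorder_not_le)
    have "(1 + \<bar>Im z\<bar>) powr (- 2) = inverse ((1 + \<bar>Im z\<bar>)^2)"
      by (simp add: powr_minus powr_realpow)
    also have "\<dots> \<le> inverse (1 + (Im z)^2)"
      by (intro le_imp_inverse_le) (auto simp: power2_eq_square algebra_simps add_pos_nonneg)
    finally have "C * (1 + \<bar>Im z\<bar>) powr (- 2) \<le> C * inverse (1 + (Im z)^2)"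
      using \<open>C \<ge> 0\<close> by (intro mult_left_mono)
    with C[OF z] show ?thesis by linarith
  qed
  then show ?thesis by blast
qed

definition V_kernel :: "(complex \<Rightarrow> complex) \<Rightarrow> nat \<Rightarrow> nat \<Rightarrow> complex \<Rightarrow> complex" where
  "V_kernel G \<kappa> k u = G u / u * (gamma_fac (1/2 + u) \<kappa> ^ k / gamma_fac (1/2) \<kappa> ^ k)"

lemma V_kernel_holomorphic:
  assumes "admissible_G G"
  shows "V_kernel G \<kappa> k holomorphic_on {z. Re z > 0}"
proof -
  define S where "S = {z::complex. Re z > 0}"
  have G: "G holomorphic_on S"
    using assms unfolding admissible_G_def by (auto intro: holomorphic_on_subset)
  have Gamma: "(\<lambda>u. Gamma ((1/2 + u + (of_nat \<kappa> + of_real e) / 2) / 2)) holomorphic_on S"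
    if "e \<ge> -1" for e :: real
  proof (rule holomorphic_Gamma')
    show "(\<lambda>u. (1/2 + u + (of_nat \<kappa> + of_real e) / 2) / 2) holomorphic_on S"
      by (intro holomorphic_on_divide holomorphic_on_add holomorphic_on_const holomorphic_on_ident) auto
    fix u assume "u \<in> S"
    then have "Re ((1/2 + u + (of_nat \<kappa> + of_real e) / 2) / 2) > 0"
      using that unfolding S_def by (simp add: field_simps)
    then show "(1/2 + u + (of_nat \<kappa> + of_real e) / 2) / 2 \<notin> \<int>\<^sub>\<le>\<^sub>0"
      by (meson complex_nonpos_Reals_iff not_le nonpos_Ints_subset_nonpos_Reals subsetD)
  qed
  have "(\<lambda>u. complex_of_real pi powr (- (1/2 + u))) holomorphic_on S"
    by (intro holomorphic_on_powr_right holomorphic_on_minus holomorphic_on_add holomorphic_on_const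
        holomorphic_on_ident)
  then have "(\<lambda>u. gamma_fac (1/2 + u) \<kappa>) holomorphic_on S"
    unfolding gamma_fac_def using Gamma[of 1] Gamma[of "-1"]
    by (intro holomorphic_on_mult) simp_all
  then have "(\<lambda>u. G u / u * (gamma_fac (1/2 + u) \<kappa> ^ k * inverse (gamma_fac (1/2) \<kappa> ^ k))) holomorphic_on S"
    by (intro holomorphic_on_mult holomorphic_on_divide G holomorphic_on_ident holomorphic_on_power
        holomorphic_on_const) (auto simp: S_def)
  then show ?thesis
    unfolding V_kernel_def S_def divide_inverse[of "gamma_fac (1/2 + _) \<kappa> ^ k"] .
qed

lemma decays_in_strips_V_kernel:
  assumes "admissible_G G"
  shows "decays_in_strips (V_kernel G \<kappa> k)"
  unfolding decays_in_strips_def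
proof (intro allI impI)
  fix a b :: real assume "a > 0"
  obtain C where C: "\<And>z. a \<le> Re z \<and> Re z \<le> b \<Longrightarrow> norm (G z) \<le> C * inverse (1 + (Im z)^2)"
    using admissible_G_strip_decay[OF assms(1)] by blast
  obtain M where M: "\<And>s. 1/2 + a \<le> Re s \<and> Re s \<le> 1/2 + b \<Longrightarrow> norm (gamma_fac s \<kappa>) \<le> M"
    using gamma_fac_bounded_on_strip[of "1/2 + a" "1/2 + b" \<kappa>] \<open>a > 0\<close> by auto
  define g0 where "g0 = norm (gamma_fac (1/2) \<kappa>) ^ k"
  have "norm (V_kernel G \<kappa> k z) \<le> (C * inverse a * (M ^ k / g0)) * inverse (1 + (Im z)^2)"
    if z: "a \<le> Re z \<and> Re z \<le> b" for z
  proof -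
    have C_nonneg: "0 \<le> C * inverse (1 + (Im z)^2)"
      using C[OF z] by (meson norm_ge_zero order.trans)
    have M_z: "norm (gamma_fac (1/2 + z) \<kappa>) \<le> M"
      using z by (intro M) simp
    have inv_z: "inverse (norm z) \<le> inverse a"
      using z complex_Re_le_cmod[of z] \<open>a > 0\<close> by (intro le_imp_inverse_le) auto
    have gamma_k: "norm (gamma_fac (1/2 + z) \<kappa> ^ k) / g0 \<le> M ^ k / g0"
      unfolding norm_power g0_def by (intro divide_right_mono power_mono M_z) auto
    have "norm (G z) * inverse (norm z) \<le> (C * inverse (1 + (Im z)^2)) * inverse a"
      by (rule mult_mono[OF C[OF z] inv_z]) (use C_nonneg in auto)
    then have "norm (G z) * inverse (norm z) * (norm (gamma_fac (1/2 + z) \<kappa> ^ k) / g0)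
        \<le> (C * inverse (1 + (Im z)^2)) * inverse a * (M ^ k / g0)"
      by (rule mult_mono[OF _ gamma_k]) (use C_nonneg \<open>a > 0\<close> in \<open>auto simp: g0_def\<close>)
    also have "norm (G z) * inverse (norm z) * (norm (gamma_fac (1/2 + z) \<kappa> ^ k) / g0)
        = norm (V_kernel G \<kappa> k z)"
      unfolding V_kernel_def g0_def norm_mult norm_divide norm_power divide_inverse
      by (simp add: norm_inverse norm_power)
    finally show ?thesis by (simp add: mult_ac)
  qed
  then show "\<exists>C. \<forall>z. a \<le> Re z \<and> Re z \<le> b \<longrightarrow> norm (V_kernel G \<kappa> k z) \<le> C * inverse (1 + (Im z)^2)"
    by blast
qed

lemma V1_decay:
  assumes "admissible_G G" "0 < \<delta>" "\<delta> \<le> 1"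
  shows "\<exists>K\<ge>0. \<forall>x>0. norm (V1 G \<kappa> x) \<le> K * x powr (- \<delta>)"
proof -
  have "V1 G \<kappa> x = vert_int1 (\<lambda>u. V_kernel G \<kappa> 1 u * complex_of_real x powr (- u))" for x
    unfolding V1_def V_kernel_def by simp
  moreover have "\<exists>K\<ge>0. \<forall>x>0. norm (vert_int1 (\<lambda>u. V_kernel G \<kappa> 1 u * complex_of_real x powr (- u)))
                   \<le> K * x powr (- \<delta>)"
    using assms by (intro norm_vert_int1_powr_le V_kernel_holomorphic decays_in_strips_V_kernel)
  ultimately show ?thesis by simp
qed

lemma V2_decay:
  assumes "admissible_G G" "0 < \<delta>" "\<delta> \<le> 1"
  shows "\<exists>K\<ge>0. \<forall>x>0. norm (V2 G \<kappa> x) \<le> K * x powr (- \<delta>)"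
proof -
  have "V2 G \<kappa> x = vert_int1 (\<lambda>u. V_kernel G \<kappa> 2 u * complex_of_real x powr (- u))" for x
    unfolding V2_def V_kernel_def by simp
  moreover have "\<exists>K\<ge>0. \<forall>x>0. norm (vert_int1 (\<lambda>u. V_kernel G \<kappa> 2 u * complex_of_real x powr (- u)))
                   \<le> K * x powr (- \<delta>)"
    using assms by (intro norm_vert_int1_powr_le V_kernel_holomorphic decays_in_strips_V_kernel)
  ultimately show ?thesis by simp
qed

lemma norm_infsum_le_dominated:
  fixes f :: "'a \<Rightarrow> complex" and w :: "'a \<Rightarrow> real"
  assumes dom: "\<And>x. x \<in> A \<Longrightarrow> norm (f x) \<le> c * w x" and "c \<ge> 0"
    and partial: "\<And>F. finite F \<Longrightarrow> F \<subseteq> A \<Longrightarrow> sum w F \<le> Z"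
  shows "norm (infsum f A) \<le> c * Z"
proof (cases "f summable_on A")
  case True
  then have abs_summable: "(\<lambda>x. norm (f x)) summable_on A"
    using summable_on_iff_abs_summable_on_complex by blast
  have "sum (\<lambda>x. norm (f x)) F \<le> c * Z" if "finite F" "F \<subseteq> A" for F
  proof -
    have "sum (\<lambda>x. norm (f x)) F \<le> c * sum w F"
      using dom that by (auto simp: sum_distrib_left intro: sum_mono)
    also have "\<dots> \<le> c * Z"
      using partial that \<open>c \<ge> 0\<close> by (intro mult_left_mono) auto
    finally show ?thesis .
  qed
  then have "infsum (\<lambda>x. norm (f x)) A \<le> c * Z"
    by (rule infsum_le_finite_sums[OF abs_summable])
  then show ?thesis
    using norm_infsum_bound[OF abs_summable] by linarith
next
  case False
  then show ?thesis
    using partial[of "{}"] \<open>c \<ge> 0\<close> by (simp add: infsum_not_exists)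
qed

lemma partial_sums_powr_bounded:
  assumes "s > 1"
  shows "\<exists>Z. \<forall>F. finite F \<longrightarrow> (\<Sum>k\<in>F. real k powr (- s)) \<le> Z"
proof -
  have "summable (\<lambda>k. real k powr (- s))"
    using assms by (subst summable_real_powr_iff) simp
  then have "(\<Sum>k\<in>F. real k powr (- s)) \<le> (\<Sum>k. real k powr (- s))" if "finite F" for F
    using that by (intro sum_le_suminf) auto
  then show ?thesis by blast
qed

lemma sum_pairs_le_mult:
  fixes f :: "'a \<Rightarrow> real" and g :: "'b \<Rightarrow> real"
  assumes "\<And>x. f x \<ge> 0" "\<And>y. g y \<ge> 0"
    and "\<And>F. finite F \<Longrightarrow> sum f F \<le> Z1" "\<And>F. finite F \<Longrightarrow> sum g F \<le> Z2"
    and "finite P"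
  shows "(\<Sum>(x, y)\<in>P. f x * g y) \<le> Z1 * Z2"
proof -
  have "(\<Sum>(x, y)\<in>P. f x * g y) \<le> (\<Sum>(x, y)\<in>fst ` P \<times> snd ` P. f x * g y)"
    using assms by (intro sum_mono2) (auto intro: mult_nonneg_nonneg rev_image_eqI)
  also have "\<dots> = sum f (fst ` P) * sum g (snd ` P)"
    by (simp add: sum_product sum.cartesian_product)
  also have "\<dots> \<le> Z1 * Z2"
    using assms assms(3)[of "{}"] by (intro mult_mono sum_nonneg) auto
  finally show ?thesis .
qed

lemma sum_triples_le_mult:
  fixes f :: "'a \<Rightarrow> real" and g :: "'b \<Rightarrow> real" and h :: "'c \<Rightarrow> real"
  assumes "\<And>x. f x \<ge> 0" "\<And>y. g y \<ge> 0" "\<And>z. h z \<ge> 0"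
    and "\<And>F. finite F \<Longrightarrow> sum f F \<le> Z1" "\<And>F. finite F \<Longrightarrow> sum g F \<le> Z2"
    and "\<And>F. finite F \<Longrightarrow> sum h F \<le> Z3"
    and "finite P"
  shows "(\<Sum>(x, y, z)\<in>P. f x * g y * h z) \<le> Z1 * Z2 * Z3"
proof -
  have "(\<Sum>(x, y, z)\<in>P. f x * g y * h z) = (\<Sum>(x, yz)\<in>P. f x * (\<lambda>(y, z). g y * h z) yz)"
    by (simp add: case_prod_beta mult.assoc)
  also have "\<dots> \<le> Z1 * (Z2 * Z3)"
    using assms by (intro sum_pairs_le_mult) (auto intro: sum_pairs_le_mult)
  finally show ?thesis by (simp add: mult.assoc)
qed

section \<open>Divisor sums\<close>

definition pair_factorizations :: "nat \<Rightarrow> (nat \<times> nat) set" where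
  "pair_factorizations n = {(d, e). d * e = n}"

definition triple_factorizations :: "nat \<Rightarrow> (nat \<times> nat \<times> nat) set" where
  "triple_factorizations n = {(n1, n2, n3). n1 * n2 * n3 = n}"

lemma finite_pair_factorizations: "n > 0 \<Longrightarrow> finite (pair_factorizations n)"
  by (rule finite_subset[of _ "{..n} \<times> {..n}"])
     (auto simp: pair_factorizations_def intro: dvd_imp_le)

lemma finite_triple_factorizations: "n > 0 \<Longrightarrow> finite (triple_factorizations n)"
  by (rule finite_subset[of _ "{..n} \<times> {..n} \<times> {..n}"])
     (auto simp: triple_factorizations_def mult.assoc intro: dvd_imp_le)

lemma divisor_count_eq_card_pair_factorizations:
  assumes "n > 0"
  shows "divisor_count n = card (pair_factorizations n)"
proof -
  have "bij_betw fst (pair_factorizations n) {d. d dvd n \<and> d > 0}"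
    by (rule bij_betw_byWitness[where f' = "\<lambda>d. (d, n div d)"])
       (use assms in \<open>auto simp: pair_factorizations_def\<close>)
  then show ?thesis
    by (simp add: divisor_count_def bij_betw_same_card)
qed

lemma divisor_count_mult_le:
  assumes "a > 0" "b > 0"
  shows "divisor_count (a * b) \<le> divisor_count a * divisor_count b"
proof -
  let ?D = "\<lambda>n::nat. {d. d dvd n \<and> d > 0}"
  have "?D (a * b) \<subseteq> (\<lambda>(x, y). x * y) ` (?D a \<times> ?D b)"
  proof
    fix d assume "d \<in> ?D (a * b)"
    then obtain x y where "d = x * y" "x dvd a" "y dvd b"
      using division_decomp by blast
    with assms show "d \<in> (\<lambda>(x, y). x * y) ` (?D a \<times> ?D b)"
      by (auto intro!: image_eqI[of _ _ "(x, y)"] intro: Nat.gr0I)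
  qed
  then have "card (?D (a * b)) \<le> card ((\<lambda>(x, y). x * y) ` (?D a \<times> ?D b))"
    using assms by (intro card_mono) auto
  also have "\<dots> \<le> card (?D a) * card (?D b)"
    using card_image_le[of "?D a \<times> ?D b"] assms by (simp add: card_cartesian_product)
  finally show ?thesis
    unfolding divisor_count_def by (simp flip: of_nat_mult)
qed

lemma divisor_count_nonneg: "divisor_count n \<ge> 0"
  by (simp add: divisor_count_def)

lemma divisor_count_mult3_le:
  assumes "a > 0" "b > 0" "c > 0"
  shows "divisor_count (a * b * c) \<le> divisor_count a * divisor_count b * divisor_count c"
proof -
  have "divisor_count (a * b * c) \<le> divisor_count (a * b) * divisor_count c"
    using assms by (intro divisor_count_mult_le) auto
  also have "\<dots> \<le> divisor_count a * divisor_count b * divisor_count c"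
    using assms by (intro mult_right_mono divisor_count_mult_le divisor_count_nonneg)
  finally show ?thesis .
qed

lemma partial_sums_divisor_count_powr_bounded:
  assumes "s > 1"
  shows "\<exists>Z. \<forall>F. finite F \<longrightarrow> (\<Sum>k\<in>F. divisor_count k * real k powr (- s)) \<le> Z"
proof -
  obtain Z where Z: "\<And>F. finite F \<Longrightarrow> (\<Sum>k\<in>F. real k powr (- s)) \<le> Z"
    using partial_sums_powr_bounded[OF assms] by blast
  have "(\<Sum>k\<in>F. divisor_count k * real k powr (- s)) \<le> Z * Z" if "finite F" for F
  proof -
    have summand: "divisor_count k * real k powr (- s)
        = (\<Sum>(d, e)\<in>pair_factorizations k. real d powr (- s) * real e powr (- s))" if "k > 0" for k
    proof -
      have "(\<Sum>(d, e)\<in>pair_factorizations k. real d powr (- s) * real e powr (- s))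
          = (\<Sum>_\<in>pair_factorizations k. real k powr (- s))"
        by (intro sum.cong refl)
           (auto simp: pair_factorizations_def powr_mult[symmetric] simp flip: of_nat_mult)
      then show ?thesis
        using that by (simp add: divisor_count_eq_card_pair_factorizations)
    qed
    \<comment> \<open>\<open>divisor_count 0 = 0\<close>, as \<open>card\<close> of an infinite set is \<open>0\<close>\<close>
    have "(\<Sum>k\<in>F. divisor_count k * real k powr (- s)) = (\<Sum>k\<in>F - {0}. divisor_count k * real k powr (- s))"
      by (rule sum.mono_neutral_right) (use that in auto)
    also have "\<dots> = (\<Sum>k\<in>F - {0}. \<Sum>(d, e)\<in>pair_factorizations k. real d powr (- s) * real e powr (- s))"
      by (intro sum.cong refl summand) auto
    also have "\<dots> = (\<Sum>(d, e)\<in>(\<Union>k\<in>F - {0}. pair_factorizations k). real d powr (- s) * real e powr (- s))"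
      by (rule sum.UNION_disjoint[symmetric])
         (use that finite_pair_factorizations in \<open>auto simp: pair_factorizations_def\<close>)
    also have "\<dots> \<le> Z * Z"
      using that by (intro sum_pairs_le_mult Z finite_UN_I) (auto simp: finite_pair_factorizations)
    finally show ?thesis .
  qed
  then show ?thesis by blast
qed

lemma partial_sums_divisor_count_triple_factorizations_bounded:
  assumes "s > 1"
  shows "\<exists>Z. \<forall>F. finite F \<longrightarrow>
           (\<Sum>n\<in>F. divisor_count n * real (card (triple_factorizations n)) * real n powr (- s)) \<le> Z"
proof -
  define g where "g k = divisor_count k * real k powr (- s)" for k
  obtain Z where Z: "\<And>F. finite F \<Longrightarrow> sum g F \<le> Z"
    using partial_sums_divisor_count_powr_bounded[OF assms] unfolding g_def by blast
  have g_nonneg: "g k \<ge> 0" for k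
    by (simp add: g_def divisor_count_nonneg)
  have "(\<Sum>n\<in>F. divisor_count n * real (card (triple_factorizations n)) * real n powr (- s)) \<le> Z * Z * Z"
    if "finite F" for F
  proof -
    have summand: "divisor_count n * real (card (triple_factorizations n)) * real n powr (- s)
        \<le> (\<Sum>(a, b, c)\<in>triple_factorizations n. g a * g b * g c)" if "n > 0" for n
    proof -
      have "divisor_count n * real (card (triple_factorizations n)) * real n powr (- s)
          = (\<Sum>(a, b, c)\<in>triple_factorizations n. g (a * b * c))"
      proof -
        have "(\<Sum>(a, b, c)\<in>triple_factorizations n. g (a * b * c)) = (\<Sum>_\<in>triple_factorizations n. g n)"
          by (intro sum.cong refl) (auto simp: triple_factorizations_def)
        then show ?thesis by (simp add: g_def)
      qed
      also have "\<dots> \<le> (\<Sum>(a, b, c)\<in>triple_factorizations n. g a * g b * g c)"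
      proof (intro sum_mono, clarify)
        fix a b c assume "(a, b, c) \<in> triple_factorizations n"
        then have "a > 0" "b > 0" "c > 0"
          using \<open>n > 0\<close> by (auto simp: triple_factorizations_def)
        then have "divisor_count (a * b * c) * (real a powr (- s) * real b powr (- s) * real c powr (- s))
            \<le> divisor_count a * divisor_count b * divisor_count c
                * (real a powr (- s) * real b powr (- s) * real c powr (- s))"
          by (intro mult_right_mono divisor_count_mult3_le) auto
        then show "g (a * b * c) \<le> g a * g b * g c"
          by (simp add: g_def powr_mult mult_ac)
      qed
      finally show ?thesis .
    qed
    have "(\<Sum>n\<in>F. divisor_count n * real (card (triple_factorizations n)) * real n powr (- s))
        = (\<Sum>n\<in>F - {0}. divisor_count n * real (card (triple_factorizations n)) * real n powr (- s))"
      by (rule sum.mono_neutral_right) (use that in auto)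
    also have "\<dots> \<le> (\<Sum>n\<in>F - {0}. \<Sum>(a, b, c)\<in>triple_factorizations n. g a * g b * g c)"
      by (intro sum_mono summand) auto
    also have "\<dots> = (\<Sum>(a, b, c)\<in>(\<Union>n\<in>F - {0}. triple_factorizations n). g a * g b * g c)"
      by (rule sum.UNION_disjoint[symmetric])
         (use that finite_triple_factorizations in \<open>auto simp: triple_factorizations_def\<close>)
    also have "\<dots> \<le> Z * Z * Z"
      using that g_nonneg Z by (intro sum_triples_le_mult finite_UN_I) (auto simp: finite_triple_factorizations)
    finally show ?thesis .
  qed
  then show ?thesis by blast
qed

section \<open>Bounds for the building blocks of \<open>\<D>\<close>\<close>

lemma powr_minus_twice_div:
  fixes x :: real
  assumes "x > 0"
  shows "x powr (- d) * x powr (- d) / x = x powr (- (1 + 2 * d))"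
  using assms by (smt (verit, best) nonzero_mult_div_cancel_left powr_add powr_mult_base)

lemma norm_Vsum_le:
  assumes V2: "\<And>x. x > 0 \<Longrightarrow> norm (V2 G \<kappa> x) \<le> K * x powr (- \<delta>)" and "K \<ge> 0"
    and Z: "\<And>F. finite F \<Longrightarrow> (\<Sum>e\<in>F. real e powr (- (1 + 2 * \<delta>))) \<le> Z"
    and "y > 0"
  shows "norm (Vsum G \<kappa> q y) \<le> K * y powr (- \<delta>) * Z"
  unfolding Vsum_def
proof (rule norm_infsum_le_dominated[where w = "\<lambda>e. real e powr (- (1 + 2 * \<delta>))"])
  fix e assume "e \<in> {e::nat. e \<ge> 1 \<and> coprime e q}"
  then have e: "real e > 0" by simp
  have "norm (V2 G \<kappa> (real e ^ 2 * y) / of_nat e) = norm (V2 G \<kappa> (real e ^ 2 * y)) / real e"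
    by (simp add: norm_divide)
  also have "\<dots> \<le> K * (real e ^ 2 * y) powr (- \<delta>) / real e"
    using e \<open>y > 0\<close> by (intro divide_right_mono V2) auto
  also have "\<dots> = K * y powr (- \<delta>) * (real e powr (- \<delta>) * real e powr (- \<delta>) / real e)"
    using e \<open>y > 0\<close> by (simp add: powr_mult power2_eq_square)
  also have "\<dots> = K * y powr (- \<delta>) * real e powr (- (1 + 2 * \<delta>))"
    using e by (simp add: powr_minus_twice_div)
  finally show "norm (V2 G \<kappa> (real e ^ 2 * y) / of_nat e) \<le> K * y powr (- \<delta>) * real e powr (- (1 + 2 * \<delta>))" .
qed (use assms in auto)

lemma norm_V1_scaled_le:
  assumes V1: "\<And>x. x > 0 \<Longrightarrow> norm (V1 G \<kappa> x) \<le> K * x powr (- \<delta>)" and "K \<ge> 0" "\<delta> \<ge> 0"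
    and "a \<ge> 1" "x > 0" "e \<ge> 1" "e' \<ge> 1"
  shows "norm (V1 G \<kappa> (real a * x * real e * real e'))
           \<le> K * (x powr (- \<delta>) * (real e powr (- \<delta>) * real e' powr (- \<delta>)))"
proof -
  have "norm (V1 G \<kappa> (real a * x * real e * real e')) \<le> K * (real a * (x * real e * real e')) powr (- \<delta>)"
    using assms V1[of "real a * x * real e * real e'"] by (simp add: mult_ac)
  also have "\<dots> \<le> K * (x * real e * real e') powr (- \<delta>)"
    using assms by (intro mult_left_mono powr_mono2') auto
  finally show ?thesis
    using assms by (simp add: powr_mult)
qed

lemma norm_Ffun_le:
  assumes V1: "\<And>x. x > 0 \<Longrightarrow> norm (V1 G \<kappa> x) \<le> K * x powr (- \<delta>)" and "K \<ge> 0" "\<delta> \<ge> 0"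
    and Z: "\<And>F. finite F \<Longrightarrow> (\<Sum>e\<in>F. real e powr (- (1 + 2 * \<delta>))) \<le> Z"
    and "a \<ge> 1" "x1 > 0" "x2 > 0" "x3 > 0"
  shows "norm (Ffun G \<kappa> q a x1 x2 x3) \<le> K ^ 3 * (x1 * x2 * x3) powr (- \<delta>) * (Z * Z * Z)"
proof -
  define w where "w e = real e powr (- (1 + 2 * \<delta>))" for e :: nat
  let ?p = "\<lambda>e::nat. real e powr (- \<delta>)"
  show ?thesis
    unfolding Ffun_def
  proof (rule norm_infsum_le_dominated[where w = "\<lambda>(e1, e2, e3). w e1 * w e2 * w e3"], goal_cases)
    case (1 t)
    then obtain e1 e2 e3 where t: "t = (e1, e2, e3)" and e: "e1 \<ge> 1" "e2 \<ge> 1" "e3 \<ge> 1"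
      by auto
    have "norm (V1 G \<kappa> (real a * x1 * real e1 * real e2)) * norm (V1 G \<kappa> (real a * x2 * real e1 * real e3))
          * norm (V1 G \<kappa> (real a * x3 * real e2 * real e3))
        \<le> (K * (x1 powr (- \<delta>) * (?p e1 * ?p e2))) * (K * (x2 powr (- \<delta>) * (?p e1 * ?p e3)))
          * (K * (x3 powr (- \<delta>) * (?p e2 * ?p e3)))"
      using e assms by (intro mult_mono norm_V1_scaled_le[OF V1]) auto
    also have "\<dots> = K ^ 3 * (x1 * x2 * x3) powr (- \<delta>)
        * ((?p e1 * ?p e1) * (?p e2 * ?p e2) * (?p e3 * ?p e3))"
      using assms by (simp add: powr_mult power3_eq_cube mult_ac)
    finally have "norm (V1 G \<kappa> (real a * x1 * real e1 * real e2) * V1 G \<kappa> (real a * x2 * real e1 * real e3)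
          * V1 G \<kappa> (real a * x3 * real e2 * real e3) / of_nat (e1 * e2 * e3))
        \<le> K ^ 3 * (x1 * x2 * x3) powr (- \<delta>)
          * ((?p e1 * ?p e1 / real e1) * (?p e2 * ?p e2 / real e2) * (?p e3 * ?p e3 / real e3))"
      by (simp add: norm_mult norm_divide divide_right_mono)
    also have "\<dots> = K ^ 3 * (x1 * x2 * x3) powr (- \<delta>) * (w e1 * w e2 * w e3)"
      using e by (simp add: w_def powr_minus_twice_div)
    finally show ?case
      unfolding t by simp
  next
    case 2
    show ?case using \<open>K \<ge> 0\<close> by simp
  next
    case (3 F)
    show ?case
      using \<open>finite F\<close> Z by (intro sum_triples_le_mult) (auto simp: w_def)
  qed
qed
lemma norm_tau3F_le:
  assumes F: "\<And>x1 x2 x3. x1 > 0 \<Longrightarrow> x2 > 0 \<Longrightarrow> x3 > 0 \<Longrightarrow>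
                norm (Ffun G \<kappa> q a x1 x2 x3) \<le> B * (x1 * x2 * x3) powr (- \<delta>)"
    and "n > 0" "q > 0"
  shows "norm (tau3F G \<kappa> q a n)
           \<le> real (card (triple_factorizations n)) * B * real q powr (3/2 * \<delta>) * real n powr (- \<delta>)"
proof -
  let ?s = "sqrt (real q)"
  have "norm (Ffun G \<kappa> q a (real n1 / ?s) (real n2 / ?s) (real n3 / ?s))
          \<le> B * real q powr (3/2 * \<delta>) * real n powr (- \<delta>)"
    if "(n1, n2, n3) \<in> triple_factorizations n" for n1 n2 n3
  proof -
    have n: "real n1 * real n2 * real n3 = real n" "n1 > 0" "n2 > 0" "n3 > 0"
      using that \<open>n > 0\<close> by (auto simp: triple_factorizations_def simp flip: of_nat_mult)
    have "real n1 / ?s * (real n2 / ?s) * (real n3 / ?s) = real n / ?s ^ 3"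
      using n(1) by (simp add: power3_eq_cube)
    also have "?s ^ 3 = real q powr (3/2)"
      by (simp add: powr_half_sqrt_powr real_sqrt_power)
    finally have "(real n1 / ?s * (real n2 / ?s) * (real n3 / ?s)) powr (- \<delta>)
        = real q powr (3/2 * \<delta>) * real n powr (- \<delta>)"
      using \<open>q > 0\<close> by (simp add: divide_powr_uminus powr_mult powr_powr)
    then show ?thesis
      using F[of "real n1 / ?s" "real n2 / ?s" "real n3 / ?s"] n \<open>q > 0\<close> by (simp add: mult.assoc)
  qed
  then have "norm (tau3F G \<kappa> q a n)
      \<le> (\<Sum>_\<in>triple_factorizations n. B * real q powr (3/2 * \<delta>) * real n powr (- \<delta>))"
    unfolding tau3F_def triple_factorizations_def[symmetric]
    by (intro order.trans[OF norm_sum] sum_mono) auto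
  then show ?thesis by (simp add: mult.assoc)
qed

lemma norm_Dsum_inner_summand_le:
  assumes tau: "norm (tau3F G1 \<kappa> q a n)
                  \<le> real (card (triple_factorizations n)) * B1 * real q powr (3/2 * \<delta>) * real n powr (- \<delta>)"
    and V: "\<And>y. y > 0 \<Longrightarrow> norm (Vsum G2 \<kappa> q y) \<le> B2 * y powr (- \<delta>)"
    and "B1 \<ge> 0" "B2 \<ge> 0" "\<delta> \<ge> 0" "a > 0" "q > 0" "n > 0"
  shows "norm (complex_of_real (divisor_count (n * a)) * tau3F G1 \<kappa> q a n
              / complex_of_real (sqrt (real (n * a) * real n)) * Vsum G2 \<kappa> q (real (n * a) / real q))
         \<le> divisor_count a * B1 * B2 * real q powr (5/2 * \<delta>)
            * (divisor_count n * real (card (triple_factorizations n)) * real n powr (- (1 + 2 * \<delta>)))"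
proof -
  let ?m = "n * a"
  have n: "real n > 0" "real n \<le> real ?m"
    using \<open>n > 0\<close> \<open>a > 0\<close> by auto
  have V_m: "norm (Vsum G2 \<kappa> q (real ?m / real q)) \<le> B2 * (real q powr \<delta> * real n powr (- \<delta>))"
  proof -
    have "norm (Vsum G2 \<kappa> q (real ?m / real q)) \<le> B2 * (real ?m / real q) powr (- \<delta>)"
      using n \<open>q > 0\<close> by (intro V) simp
    also have "\<dots> \<le> B2 * (real n / real q) powr (- \<delta>)"
      using n \<open>q > 0\<close> \<open>B2 \<ge> 0\<close> \<open>\<delta> \<ge> 0\<close> by (intro mult_left_mono powr_mono2' divide_right_mono) auto
    also have "(real n / real q) powr (- \<delta>) = real q powr \<delta> * real n powr (- \<delta>)"
      using n \<open>q > 0\<close> by (simp add: divide_powr_uminus powr_divide)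
    finally show ?thesis .
  qed
  have sqrt_mn: "real n \<le> sqrt (real ?m * real n)"
    using n real_sqrt_le_mono[of "real n * real n" "real ?m * real n"] by (simp add: mult_right_mono)
  have "divisor_count ?m * norm (tau3F G1 \<kappa> q a n) * norm (Vsum G2 \<kappa> q (real ?m / real q))
        / sqrt (real ?m * real n)
      \<le> (divisor_count n * divisor_count a)
        * (real (card (triple_factorizations n)) * B1 * real q powr (3/2 * \<delta>) * real n powr (- \<delta>))
        * (B2 * (real q powr \<delta> * real n powr (- \<delta>))) / real n"
    using n sqrt_mn \<open>a > 0\<close> \<open>B1 \<ge> 0\<close> \<open>B2 \<ge> 0\<close>
    by (intro frac_le mult_mono divisor_count_mult_le tau V_m mult_nonneg_nonneg divisor_count_nonneg) auto
  also have "\<dots> = divisor_count a * B1 * B2 * (real q powr (3/2 * \<delta>) * real q powr \<delta>)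
      * (divisor_count n * real (card (triple_factorizations n))
         * (real n powr (- \<delta>) * real n powr (- \<delta>) / real n))"
    by (simp add: field_simps)
  also have "\<dots> = divisor_count a * B1 * B2 * real q powr (5/2 * \<delta>)
      * (divisor_count n * real (card (triple_factorizations n)) * real n powr (- (1 + 2 * \<delta>)))"
    unfolding powr_minus_twice_div[OF n(1)] by (simp add: powr_add[symmetric])
  finally show ?thesis
    by (simp add: norm_mult norm_divide divisor_count_nonneg)
qed

lemma norm_Dsum_inner_le:
  assumes tau: "\<And>n. n > 0 \<Longrightarrow> norm (tau3F G1 \<kappa> q a n)
                  \<le> real (card (triple_factorizations n)) * B1 * real q powr (3/2 * \<delta>) * real n powr (- \<delta>)"
    and V: "\<And>y. y > 0 \<Longrightarrow> norm (Vsum G2 \<kappa> q y) \<le> B2 * y powr (- \<delta>)"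
    and "B1 \<ge> 0" "B2 \<ge> 0" "\<delta> \<ge> 0" "a > 0" "q > 0"
    and S: "\<And>F. finite F \<Longrightarrow>
              (\<Sum>n\<in>F. divisor_count n * real (card (triple_factorizations n)) * real n powr (- (1 + 2 * \<delta>))) \<le> S"
  shows "norm (\<Sum>\<^sub>\<infinity> (m, n) \<in> {(m::nat, n::nat). m \<ge> 1 \<and> n \<ge> 1 \<and> m = n * a}.
              complex_of_real (divisor_count m) * tau3F G1 \<kappa> q a n
              / complex_of_real (sqrt (real m * real n)) * Vsum G2 \<kappa> q (real m / real q))
         \<le> divisor_count a * B1 * B2 * real q powr (5/2 * \<delta>) * S"
proof -
  define w where "w n = divisor_count n * real (card (triple_factorizations n)) * real n powr (- (1 + 2 * \<delta>))"
    for n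
  show ?thesis
  proof (rule norm_infsum_le_dominated[where w = "\<lambda>(m, n). w n"], goal_cases)
    case (1 t)
    then obtain n where "t = (n * a, n)" and "n > 0"
      by auto
    with norm_Dsum_inner_summand_le[OF tau V] assms show ?case
      by (simp add: w_def)
  next
    case 2
    show ?case
      using \<open>B1 \<ge> 0\<close> \<open>B2 \<ge> 0\<close> by (simp add: divisor_count_nonneg)
  next
    case (3 F)
    then have "fst p = snd p * a" if "p \<in> F" for p
      using that by auto
    then have "inj_on snd F"
      by (intro inj_onI) (metis prod_eq_iff)
    then have "(\<Sum>(m, n)\<in>F. w n) = sum w (snd ` F)"
      by (simp add: sum.reindex case_prod_beta)
    then show ?case
      using S[of "snd ` F"] \<open>finite F\<close> by (simp add: w_def)
  qed
qed

lemma norm_Dsum_le_of_bounds: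
  assumes K1: "K1 \<ge> 0" "\<And>x. x > 0 \<Longrightarrow> norm (V1 G1 \<kappa> x) \<le> K1 * x powr (- \<delta>)"
    and K2: "K2 \<ge> 0" "\<And>x. x > 0 \<Longrightarrow> norm (V2 G2 \<kappa> x) \<le> K2 * x powr (- \<delta>)"
    and Z: "\<And>F. finite F \<Longrightarrow> (\<Sum>e\<in>F. real e powr (- (1 + 2 * \<delta>))) \<le> Z"
    and S: "\<And>F. finite F \<Longrightarrow>
      (\<Sum>n\<in>F. divisor_count n * real (card (triple_factorizations n)) * real n powr (- (1 + 2 * \<delta>))) \<le> S"
    and Zt: "\<And>F. finite F \<Longrightarrow> (\<Sum>a\<in>F. divisor_count a * real a powr (- (3/2))) \<le> Zt"
    and "\<delta> \<ge> 0" "q > 0"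
  shows "norm (Dsum G1 G2 \<kappa> q) \<le> (K1 ^ 3 * (Z * Z * Z) * (K2 * Z) * S) * real q powr (5/2 * \<delta>) * Zt"
proof -
  define B1 where "B1 = K1 ^ 3 * (Z * Z * Z)"
  define B2 where "B2 = K2 * Z"
  have B: "B1 \<ge> 0" "B2 \<ge> 0" "S \<ge> 0"
    using K1 K2 Z[of "{}"] S[of "{}"] by (simp_all add: B1_def B2_def)
  have V: "norm (Vsum G2 \<kappa> q y) \<le> B2 * y powr (- \<delta>)" if "y > 0" for y
    using norm_Vsum_le[OF K2(2,1) Z that] by (simp add: B2_def mult_ac)
  have "norm (Dsum G1 G2 \<kappa> q) \<le> (B1 * B2 * real q powr (5/2 * \<delta>) * S) * Zt"
    unfolding Dsum_def
  proof (rule norm_infsum_le_dominated[where w = "\<lambda>a. divisor_count a * real a powr (- (3/2))"], goal_cases)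
    case (1 a)
    then have "a > 0" by simp
    have tau: "norm (tau3F G1 \<kappa> q a n)
        \<le> real (card (triple_factorizations n)) * B1 * real q powr (3/2 * \<delta>) * real n powr (- \<delta>)"
      if "n > 0" for n
      using norm_Ffun_le[OF K1(2,1) _ Z] assms \<open>a > 0\<close> that
      by (intro norm_tau3F_le) (auto simp: B1_def mult_ac)
    have inner: "norm (\<Sum>\<^sub>\<infinity> (m, n) \<in> {(m::nat, n::nat). m \<ge> 1 \<and> n \<ge> 1 \<and> m = n * a}.
            complex_of_real (divisor_count m) * tau3F G1 \<kappa> q a n
            / complex_of_real (sqrt (real m * real n)) * Vsum G2 \<kappa> q (real m / real q))
        \<le> divisor_count a * B1 * B2 * real q powr (5/2 * \<delta>) * S"
      using B assms \<open>a > 0\<close> by (intro norm_Dsum_inner_le tau V S) auto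
    have "\<bar>moebius_mu a\<bar> \<le> 1"
      by (simp add: moebius_mu_def power_abs)
    then have mu: "norm (complex_of_real (moebius_mu a / real a powr (3/2))) \<le> real a powr (- (3/2))"
      using \<open>a > 0\<close> unfolding norm_of_real by (simp add: abs_divide powr_minus_divide divide_right_mono)
    show ?case
      unfolding norm_mult by (rule order.trans[OF mult_mono[OF mu inner]]) (simp_all add: mult_ac)
  next
    case 2
    show ?case using B by simp
  next
    case (3 F)
    then show ?case using Zt by simp
  qed
  then show ?thesis by (simp add: B1_def B2_def mult_ac)
qed

lemma norm_Dsum_le:
  assumes "admissible_G G1" "admissible_G G2" "0 < \<delta>" "\<delta> \<le> 1"
  shows "\<exists>C\<ge>0. \<forall>q>0. norm (Dsum G1 G2 \<kappa> q) \<le> C * real q powr (5/2 * \<delta>)"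
proof -
  obtain K1 where K1: "K1 \<ge> 0" "\<And>x. x > 0 \<Longrightarrow> norm (V1 G1 \<kappa> x) \<le> K1 * x powr (- \<delta>)"
    using V1_decay[OF assms(1,3,4)] by blast
  obtain K2 where K2: "K2 \<ge> 0" "\<And>x. x > 0 \<Longrightarrow> norm (V2 G2 \<kappa> x) \<le> K2 * x powr (- \<delta>)"
    using V2_decay[OF assms(2,3,4)] by blast
  obtain Z where Z: "\<And>F. finite F \<Longrightarrow> (\<Sum>e\<in>F. real e powr (- (1 + 2 * \<delta>))) \<le> Z"
    using partial_sums_powr_bounded[of "1 + 2 * \<delta>"] assms by auto
  obtain S where S: "\<And>F. finite F \<Longrightarrow>
      (\<Sum>n\<in>F. divisor_count n * real (card (triple_factorizations n)) * real n powr (- (1 + 2 * \<delta>))) \<le> S"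
    using partial_sums_divisor_count_triple_factorizations_bounded[of "1 + 2 * \<delta>"] assms by auto
  obtain Zt where Zt: "\<And>F. finite F \<Longrightarrow> (\<Sum>a\<in>F. divisor_count a * real a powr (- (3/2))) \<le> Zt"
    using partial_sums_divisor_count_powr_bounded[of "3/2"] by auto
  let ?C = "K1 ^ 3 * (Z * Z * Z) * (K2 * Z) * S * Zt"
  have "?C \<ge> 0"
    using K1 K2 Z[of "{}"] S[of "{}"] Zt[of "{}"] by simp
  moreover have "norm (Dsum G1 G2 \<kappa> q) \<le> ?C * real q powr (5/2 * \<delta>)" if "q > 0" for q
    using norm_Dsum_le_of_bounds[OF K1 K2 Z S Zt _ that] assms by (simp add: mult_ac)
  ultimately show ?thesis by blast
qed

text \<open>The bound holds for every \<open>q \<ge> 1\<close>.\<close>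

theorem mainTheorem6:
  fixes \<kappa> :: nat and G1 G2 :: "complex \<Rightarrow> complex" and \<epsilon> :: real
  assumes "\<kappa> > 0" and "even \<kappa>"
    and "admissible_G G1" and "admissible_G G2"
    and "\<epsilon> > 0"
  shows "\<exists>C Q. \<forall>q::nat. prime q \<and> q \<ge> Q \<longrightarrow>
           norm (Dsum G1 G2 \<kappa> q) \<le> C * real q powr \<epsilon>"
proof -
  define \<delta> where "\<delta> = min (2/5 * \<epsilon>) 1"
  have \<delta>: "0 < \<delta>" "\<delta> \<le> 1" "5/2 * \<delta> \<le> \<epsilon>"
    using \<open>\<epsilon> > 0\<close> by (auto simp: \<delta>_def)
  obtain C where "C \<ge> 0" and C: "\<And>q. q > 0 \<Longrightarrow> norm (Dsum G1 G2 \<kappa> q) \<le> C * real q powr (5/2 * \<delta>)"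
    using norm_Dsum_le[OF assms(3,4) \<delta>(1,2)] by blast
  have "norm (Dsum G1 G2 \<kappa> q) \<le> C * real q powr \<epsilon>" if "q \<ge> 1" for q :: nat
  proof -
    have "real q powr (5/2 * \<delta>) \<le> real q powr \<epsilon>"
      using that \<delta> by (intro powr_mono) auto
    then show ?thesis
      using C[of q] that \<open>C \<ge> 0\<close> by (meson mult_left_mono order.trans less_le_trans zero_less_one)
  qed
  then show ?thesis by blast
qed

end
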